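(* For all $x\in\mathbb{C}$ and all integers $n\ge0$, \[ \sum_{k=0}^n x^k\big(L_{3k}+(2x-1)F_{3k+3}\big)=2x^{n+1}F_{3n+3} \] and \[ \sum_{k=0}^n x^k\big(5F_{3k}+(2x-1)L_{3k+3}\big)=2x^{n+1}L_{3n+3}-4. \]
   Context: $F_n,L_n$ are the Fibonacci and Lucas numbers: $F_0=0$, $F_1=1$, $L_0=2$, $L_1=1$, $W_n=W_{n-1}+W_{n-2}$. *)

theory Defs
  imports Complex_Main "HOL-Number_Theory.Fib"
begin

fun lucas :: "nat \<Rightarrow> nat" where
  "lucas 0 = 2"
| "lucas (Suc 0) = 1"
| "lucas (Suc (Suc n)) = lucas (Suc n) + lucas n"

end

theory Submission
  imports Defs
begin

text \<open>Both sums telescope. By the index shifts \<open>F(m+3) = L(m) + 2 F(m)\<close> and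
  \<open>L(m+3) = 5 F(m) + 2 L(m)\<close>, the \<open>k\<close>-th summand equals \<open>g(k+1) - g(k)\<close> with
  \<open>g(k) = 2 x^k F(3k)\<close>, resp. \<open>g(k) = 2 x^k L(3k)\<close>, and \<open>g(0)\<close> is \<open>0\<close>, resp. \<open>4\<close>.\<close>

lemma fib_add_3: "fib (m + 3) = lucas m + 2 * fib m"
  by (induction m rule: lucas.induct) (auto simp: numeral_3_eq_3)

lemma lucas_add_3: "lucas (m + 3) = 5 * fib m + 2 * lucas m"
  by (induction m rule: lucas.induct) (auto simp: numeral_3_eq_3)

lemma fib_summand_eq_diff:
  fixes x :: "'a::comm_ring_1"
  shows "x ^ k * (of_nat (lucas (3*k)) + (2*x - 1) * of_nat (fib (3*k+3)))
           = 2 * x ^ Suc k * of_nat (fib (3 * Suc k)) - 2 * x ^ k * of_nat (fib (3*k))"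
proof -
  have "(of_nat (fib (3*k+3)) :: 'a) = of_nat (lucas (3*k)) + 2 * of_nat (fib (3*k))"
    by (simp add: fib_add_3)
  then show ?thesis
    by (simp add: algebra_simps)
qed

lemma lucas_summand_eq_diff:
  fixes x :: "'a::comm_ring_1"
  shows "x ^ k * (5 * of_nat (fib (3*k)) + (2*x - 1) * of_nat (lucas (3*k+3)))
           = 2 * x ^ Suc k * of_nat (lucas (3 * Suc k)) - 2 * x ^ k * of_nat (lucas (3*k))"
proof -
  have "(of_nat (lucas (3*k+3)) :: 'a) = 5 * of_nat (fib (3*k)) + 2 * of_nat (lucas (3*k))"
    by (simp add: lucas_add_3)
  then show ?thesis
    by (simp add: algebra_simps)
qed

theorem corollary4:
  fixes x :: complex and n :: nat
  shows "(\<Sum>k=0..n. x ^ k * (of_nat (lucas (3*k)) + (2*x - 1) * of_nat (fib (3*k+3))))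
           = 2 * x ^ (n+1) * of_nat (fib (3*n+3))
         \<and> (\<Sum>k=0..n. x ^ k * (5 * of_nat (fib (3*k)) + (2*x - 1) * of_nat (lucas (3*k+3))))
           = 2 * x ^ (n+1) * of_nat (lucas (3*n+3)) - 4"
proof
  show "(\<Sum>k=0..n. x ^ k * (of_nat (lucas (3*k)) + (2*x - 1) * of_nat (fib (3*k+3))))
          = 2 * x ^ (n+1) * of_nat (fib (3*n+3))"
    unfolding fib_summand_eq_diff sum_Suc_diff[of 0 n "\<lambda>k. 2 * x ^ k * of_nat (fib (3*k))", OF le0]
    by (simp add: algebra_simps)
  show "(\<Sum>k=0..n. x ^ k * (5 * of_nat (fib (3*k)) + (2*x - 1) * of_nat (lucas (3*k+3))))
          = 2 * x ^ (n+1) * of_nat (lucas (3*n+3)) - 4"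
    unfolding lucas_summand_eq_diff sum_Suc_diff[of 0 n "\<lambda>k. 2 * x ^ k * of_nat (lucas (3*k))", OF le0]
    by (simp add: algebra_simps)
qed

end
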